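(* Let $k\ge1$, and let $\mathcal P=\{p_1,\dots,p_{k^2}\}$ be a family of real polynomials in the commuting variables $x_1,\dots,x_{2k^2}$ admitting an nc representation $p(X,Y)$ of degree $d>1$. Let $t\ge2$ and suppose $$p(X,Y)=e_1(XY)^t+e_2(YX)^t+e_3X^{2t}+e_4Y^{2t}+q(X,Y),$$ where $q$ contains no scalar multiples of $(XY)^t,(YX)^t,X^{2t},Y^{2t}$, and $e_1,e_2,e_3,e_4$ are pairwise distinct real numbers. Then, counting terms over all polynomials of the family, the family contains: exactly $k^2-k$ terms of the form $e_1x_u^tx_v^t$ with $u\ne v$ if $e_1\ne0$; exactly $k^2-k$ such terms with coefficient $e_2$ if $e_2\ne0$; exactly $k^2-k$ such terms with coefficient $e_3$ if $e_3\ne0$; exactly $k^2-k$ such terms with coefficient $e_4$ if $e_4\ne0$; exactly $k$ such terms with coefficient $\varphi(t,t)$ if $\varphi(t,t)\ne0$; exactly $k$ one letter terms $e_3x_u^{2t}$ if $e_3\ne0$; and exactly $k$ one letter terms $e_4x_u^{2t}$ if $e_4\ne0$. These account for all one letter terms of degree $2t$ and all two letter terms of the form $cx_u^tx_v^t$ ($u\ne v$, $c\ne0$) in the family. Moreover, each of the $k$ polynomials on the diagonal of the array $p(X,Y)$ contains $(\chi(e_1)+\chi(e_2)+\chi(e_3)+\chi(e_4))(k-1)$ terms of the form $cx_u^tx_v^t$ ($u\ne v$) built from off-diagonal entries of $X,Y$ and $\chi(\varphi(t,t))$ such terms built from diagonal entries, as well as exactly one one letter term of degree $2t$ with coefficient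 $e_3$ and exactly one with coefficient $e_4$, whose letters are diagonal entries; and no off-diagonal polynomial of the array contains any term of the form $cx_u^tx_v^t$ with $u\ne v$, $c\ne0$.
   Context: The family $\mathcal P$ admits an nc representation $p(X,Y)$ if there are $k\times k$ matrices $X,Y$ whose $2k^2$ entries are the variables $x_1,\dots,x_{2k^2}$, each used exactly once, and a noncommutative polynomial $p$ in two letters with real coefficients such that the matrix $p(X,Y)$ is a $k\times k$ array whose entries are $p_1,\dots,p_{k^2}$, each exactly once. A "term" of a polynomial means a monomial with its nonzero coefficient after collecting like terms. $\varphi(i,j)$ is the sum of coefficients of all monomials of $p$ of degree $i$ in $X$ and $j$ in $Y$. $\chi(a)=1$ if $a\ne0$ and $\chi(a)=0$ if $a=0$. *)

theory Defs
  imports Complex_Main "HOL-Library.Multiset"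
begin

text \<open>Noncommutative polynomials in two letters: functions from words to real
coefficients (finitely supported).  Letter False = X, letter True = Y.
Commutative monomials in the variables x_1, x_2, ... are multisets of
variable indices; a commutative polynomial is a map monomial -> coefficient.\<close>

type_synonym ncpoly = "bool list \<Rightarrow> real"

definition nc_support :: "ncpoly \<Rightarrow> bool list set" where
  "nc_support p = {w. p w \<noteq> 0}"

definition nc_degree :: "ncpoly \<Rightarrow> nat" where
  "nc_degree p = Max (length ` nc_support p)"

definition wXY :: "nat \<Rightarrow> bool list" where "wXY t = concat (replicate t [False, True])"
definition wYX :: "nat \<Rightarrow> bool list" where "wYX t = concat (replicate t [True, False])"
definition wX  :: "nat \<Rightarrow> bool list" where "wX n = replicate n False"
definition wY  :: "nat \<Rightarrow> bool list" where "wY n = replicate n True"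

definition phi :: "ncpoly \<Rightarrow> nat \<Rightarrow> nat \<Rightarrow> real" where
  "phi p i j = (\<Sum>w\<in>{w\<in>nc_support p. count_list w False = i \<and> count_list w True = j}. p w)"

definition chi :: "real \<Rightarrow> nat" where "chi a = (if a \<noteq> 0 then 1 else 0)"

definition paths :: "nat \<Rightarrow> nat \<Rightarrow> nat \<Rightarrow> nat \<Rightarrow> nat list set" where
  "paths k i j n = {ps. length ps = Suc n \<and> hd ps = i \<and> last ps = j \<and> set ps \<subseteq> {..<k}}"

text \<open>The commutative monomial obtained from word w along index path ps, where
var b r s is the variable in entry (r,s) of X (b = False) or Y (b = True).\<close>
definition wmono :: "(bool \<Rightarrow> nat \<Rightarrow> nat \<Rightarrow> nat) \<Rightarrow> bool list \<Rightarrow> nat list \<Rightarrow> nat multiset" where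
  "wmono var w ps = mset (map (\<lambda>m. var (w ! m) (ps ! m) (ps ! Suc m)) [0..<length w])"

text \<open>Coefficient of monomial M in entry (i,j) of the k x k matrix p(X,Y).\<close>
definition entry :: "(bool \<Rightarrow> nat \<Rightarrow> nat \<Rightarrow> nat) \<Rightarrow> nat \<Rightarrow> ncpoly \<Rightarrow> nat \<Rightarrow> nat \<Rightarrow> nat multiset \<Rightarrow> real" where
  "entry var k p i j M =
     (\<Sum>w\<in>nc_support p. p w * of_nat (card {ps\<in>paths k i j (length w). wmono var w ps = M}))"

definition twoletter :: "nat \<Rightarrow> nat multiset \<Rightarrow> bool" where
  "twoletter t M = (\<exists>u v. u \<noteq> v \<and> M = replicate_mset t u + replicate_mset t v)"

definition oneletter :: "nat \<Rightarrow> nat multiset \<Rightarrow> bool" where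
  "oneletter n M = (\<exists>u. M = replicate_mset n u)"

definition diag_vars :: "(bool \<Rightarrow> nat \<Rightarrow> nat \<Rightarrow> nat) \<Rightarrow> nat \<Rightarrow> nat set" where
  "diag_vars var k = {var b i i | b i. i < k}"

definition offdiag_vars :: "(bool \<Rightarrow> nat \<Rightarrow> nat \<Rightarrow> nat) \<Rightarrow> nat \<Rightarrow> nat set" where
  "offdiag_vars var k = {var b i j | b i j. i < k \<and> j < k \<and> i \<noteq> j}"

end

theory Submission
  imports Defs
begin

(*
  The 2k^2 variables are distinct, so the commutative monomial contributed to the entry (i, j)
  of p(X, Y) by a word w and an index walk i = i_0, ..., i_n = j remembers the multiset of
  labelled edges (letter, i_m, i_(m+1)) of the walk.  A monomial x_u^t x_v^t with u != v
  therefore comes from walks of length 2t using two labelled edges t times each.  For t >= 2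
  such a walk either stays at one vertex a, alternating between the X- and the Y-loop at a in
  any order, or alternates between two opposite edges a -> c and c -> a.  In the first case
  every word with t letters of each kind contributes, which gives the coefficient phi(t, t) in
  the entry (a, a); in the second case only the alternating words (XY)^t, (YX)^t, X^2t, Y^2t
  contribute, to the entries (a, a) and (c, c).  Likewise x_u^2t only comes from a loop
  traversed 2t times by X^2t or Y^2t.  Counting letters and vertices a != c gives the numbers
  k^2 - k, k and k - 1 of the statement.
*)

lemma image_mset_eq_image_mset_iff:
  assumes "inj_on f (set_mset A \<union> set_mset B)"
  shows "image_mset f A = image_mset f B \<longleftrightarrow> A = B"
  using image_mset_eq_image_mset_plusD[of f A B "{#}"] assms by auto

lemma mset_eq_bool_counts:
  "mset w = replicate_mset s False + replicate_mset t True \<longleftrightarrow>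
    count_list w False = s \<and> count_list w True = t"
proof
  assume "count_list w False = s \<and> count_list w True = t"
  then show "mset w = replicate_mset s False + replicate_mset t True"
    by (intro multiset_eqI) (auto simp: count_mset)
qed (auto simp flip: count_mset)

lemma card_diagonal_triples:
  fixes k :: nat
  assumes "\<And>i j x. R i j x \<Longrightarrow> i = j" "\<And>i. i < k \<Longrightarrow> finite {x. R i i x}"
  shows "card {(i, j, x). i < k \<and> j < k \<and> R i j x} = (\<Sum>i<k. card {x. R i i x})"
proof -
  have "{(i, j, x). i < k \<and> j < k \<and> R i j x} = (\<lambda>(i, x). (i, i, x)) ` (SIGMA i:{..<k}. {x. R i i x})"
    using assms(1) by force
  moreover have "inj_on (\<lambda>(i, x). (i, i, x)) (SIGMA i:{..<k}. {x. R i i x})"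
    by (auto simp: inj_on_def)
  ultimately have "card {(i, j, x). i < k \<and> j < k \<and> R i j x} = card (SIGMA i:{..<k}. {x. R i i x})"
    by (simp add: card_image)
  also have "\<dots> = (\<Sum>i<k. card {x. R i i x})"
    using assms(2) by (intro card_SigmaI) auto
  finally show ?thesis .
qed

lemma card_bool: "card {b. Q b} = of_bool (Q False) + of_bool (Q True)"
proof -
  have "{b. Q b} = (if Q False then {False} else {}) \<union> (if Q True then {True} else {})"
    by (auto split: if_splits) (metis (full_types))+
  then show ?thesis by simp
qed

lemma card_bool_pairs:
  "card {(b1, b2). Q b1 b2} =
    of_bool (Q False False) + of_bool (Q False True) + of_bool (Q True False) + of_bool (Q True True)"
proof -
  have "{(b1, b2). Q b1 b2} = (SIGMA b1:UNIV. {b2. Q b1 b2})"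
    by auto
  then show ?thesis
    by (simp add: card_bool UNIV_bool)
qed

fun alternating :: "'a \<Rightarrow> 'a \<Rightarrow> nat \<Rightarrow> 'a list" where
  "alternating x y 0 = []"
| "alternating x y (Suc n) = x # alternating y x n"

lemma length_alternating [simp]: "length (alternating x y n) = n"
  by (induction n arbitrary: x y) auto

lemma alternating_eq_Nil_iff [simp]: "alternating x y n = [] \<longleftrightarrow> n = 0"
  by (cases n) auto

lemma alternating_same: "alternating x x n = replicate n x"
  by (induction n) auto

lemma concat_replicate_pair: "concat (replicate t [x, y]) = alternating x y (2 * t)"
  by (induction t) auto

lemma mset_alternating_double:
  "mset (alternating x y (2 * t)) = replicate_mset t x + replicate_mset t y"
  by (induction t) auto

lemma last_alternating: "n \<noteq> 0 \<Longrightarrow> last (alternating x y n) = (if odd n then x else y)"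
  by (induction n arbitrary: x y) auto

lemma set_alternating: "set (alternating x y n) \<subseteq> {x, y}"
  by (induction n arbitrary: x y) auto

lemma alternating_if_successively_neq:
  assumes "successively (\<noteq>) (x # l)" "set l \<subseteq> {x, y}"
  shows "x # l = alternating x y (Suc (length l))"
  using assms
proof (induction l arbitrary: x y)
  case (Cons z l)
  then have "z = y" "successively (\<noteq>) (z # l)" "set l \<subseteq> {z, x}" by auto
  with Cons.IH show ?case by fastforce
qed simp

section \<open>Labelled walks\<close>

definition labelled_edges :: "'a list \<Rightarrow> 'b list \<Rightarrow> ('a \<times> 'b \<times> 'b) list" where
  "labelled_edges w ps = map (\<lambda>m. (w ! m, ps ! m, ps ! Suc m)) [0..<length w]"

lemma labelled_edges_Nil [simp]: "labelled_edges [] ps = []"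
  by (simp add: labelled_edges_def)

lemma labelled_edges_Cons [simp]:
  "labelled_edges (b # w) (a # ps) = (b, a, ps ! 0) # labelled_edges w ps"
  by (simp add: labelled_edges_def map_upt_Suc del: upt_Suc)

lemma length_labelled_edges [simp]: "length (labelled_edges w ps) = length w"
  by (simp add: labelled_edges_def)

lemma nth_labelled_edges: "m < length w \<Longrightarrow> labelled_edges w ps ! m = (w ! m, ps ! m, ps ! Suc m)"
  by (simp add: labelled_edges_def)

fun joins :: "'a \<times> 'b \<times> 'b \<Rightarrow> 'a \<times> 'b \<times> 'b \<Rightarrow> bool" where
  "joins (_, _, c) (_, a, _) \<longleftrightarrow> c = a"

lemma successively_joins_labelled_edges: "successively joins (labelled_edges w ps)"
  by (simp add: successively_conv_nth nth_labelled_edges)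

lemma labelled_edges_alternating:
  "labelled_edges (alternating b1 b2 n) (alternating a c (Suc n)) = alternating (b1, a, c) (b2, c, a) n"
  by (induction n arbitrary: b1 b2 a c) auto

lemma labelled_edges_Cons_replicate [simp]:
  "length w \<le> n \<Longrightarrow> labelled_edges w (a # replicate n a) = map (\<lambda>b. (b, a, a)) w"
proof (induction w arbitrary: n)
  case (Cons b w)
  then obtain m where "n = Suc m" "length w \<le> m"
    by (cases n) auto
  with Cons.IH show ?case by simp
qed simp

lemma labelled_edges_inj:
  assumes "labelled_edges w ps = labelled_edges w' ps'" "w \<noteq> []"
    "length ps = Suc (length w)" "length ps' = Suc (length w')"
  shows "w = w' \<and> ps = ps'"
proof -
  have len: "length w' = length w"
    using arg_cong[OF assms(1), of length] by simp
  have at: "w ! m = w' ! m \<and> ps ! m = ps' ! m \<and> ps ! Suc m = ps' ! Suc m" if "m < length w" for m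
    using arg_cong[OF assms(1), of "\<lambda>l. l ! m"] that len by (simp add: nth_labelled_edges)
  have "ps ! m = ps' ! m" if "m < Suc (length w)" for m
  proof (cases m)
    case (Suc m')
    then show ?thesis using at[of m'] that by simp
  qed (use at assms(2) in auto)
  then show ?thesis
    using at len assms(3,4) by (auto intro: nth_equalityI)
qed

lemma walk_at_one_vertex:
  assumes "set (labelled_edges w ps) \<subseteq> UNIV \<times> {a} \<times> {a}" "length ps = Suc (length w)" "w \<noteq> []"
  shows "ps = replicate (Suc (length w)) a"
proof (rule nth_equalityI)
  have at: "ps ! m = a \<and> ps ! Suc m = a" if "m < length w" for m
    using assms(1) nth_mem[of m "labelled_edges w ps"] that by (auto simp: nth_labelled_edges)
  show "ps ! m = replicate (Suc (length w)) a ! m" if "m < length ps" for m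
  proof (cases m)
    case 0
    then show ?thesis using at[of 0] assms(3) by simp
  next
    case (Suc m')
    then show ?thesis using at[of m'] that assms(2) by simp
  qed
qed (use assms in simp)

(* Away from the source of (b', a', c') the walk can only take the loop, so it never moves again. *)
lemma walk_stuck_at_loop:
  assumes "successively joins ((b0, a0, c0) # l)" "set l \<subseteq> {(b, v, v), (b', a', c')}" "c0 \<noteq> a'"
  shows "(b', a', c') \<notin> set l"
  using assms
proof (induction l arbitrary: b0 a0 c0)
  case (Cons e l)
  then have "e = (b, c0, c0)" by auto
  with Cons show ?case by auto
qed simp

lemma walk_loop_nonloop_count:
  assumes walk: "successively joins l" and edges: "set l \<subseteq> {(b, v, v), (b', a', c')}" and "a' \<noteq> c'"
  shows "count (mset l) (b', a', c') \<le> 1"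
proof (rule ccontr)
  assume "\<not> ?thesis"
  then obtain xs ys where l: "l = xs @ (b', a', c') # ys" "(b', a', c') \<notin> set xs"
    using split_list_first[of "(b', a', c')" l] by (metis count_eq_zero_iff in_multiset_in_set not_le zero_le_one)
  with \<open>\<not> ?thesis\<close> have "(b', a', c') \<in> set ys"
    by (simp add: count_eq_zero_iff[symmetric] del: count_eq_zero_iff)
  moreover have "successively joins ((b', a', c') # ys)"
    using walk l by (simp add: successively_append_iff)
  ultimately show False
    using walk_stuck_at_loop[of b' a' c' ys b v] edges l \<open>a' \<noteq> c'\<close> by auto
qed

lemma walk_loops_same_vertex:
  assumes walk: "successively joins l" and edges: "set l = {(b1, a1, a1), (b2, a2, a2)}"
  shows "a1 = a2"
proof (rule ccontr)
  assume ne: "a1 \<noteq> a2"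
  obtain e l' where l: "l = e # l'"
    using edges by (cases l) auto
  have in1: "(b1, a1, a1) \<in> set l" and in2: "(b2, a2, a2) \<in> set l"
    using edges by auto
  show False
  proof (cases "e = (b1, a1, a1)")
    case True
    then have "(b2, a2, a2) \<notin> set l'"
      using walk_stuck_at_loop[of b1 a1 a1 l' b1 a1 b2 a2 a2] walk edges ne l by auto
    then show False using in2 l ne True by auto
  next
    case False
    then have "e = (b2, a2, a2)" using edges l by auto
    then have "(b1, a1, a1) \<notin> set l'"
      using walk_stuck_at_loop[of b2 a2 a2 l' b2 a2 b1 a1 a1] walk edges ne l by auto
    then show False using in1 l ne \<open>e = (b2, a2, a2)\<close> by auto
  qed
qed

lemma walk_nonloops_alternate:
  assumes walk: "successively joins l" and edges: "set l = {e1, e2}"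
    and e1: "\<not> joins e1 e1" and e2: "\<not> joins e2 e2" and len: "3 \<le> length l"
  shows "joins e1 e2 \<and> joins e2 e1 \<and>
    (l = alternating e1 e2 (length l) \<or> l = alternating e2 e1 (length l))"
proof -
  obtain e l' where l: "l = e # l'"
    using len by (cases l) auto
  define e' where "e' = (if e = e1 then e2 else e1)"
  have "successively (\<noteq>) l"
    by (rule successively_mono[OF walk]) (use edges e1 e2 in auto)
  moreover have "set l' \<subseteq> {e, e'}" and pair: "{e, e'} = {e1, e2}"
    using edges l by (auto simp: e'_def)
  ultimately have alt: "l = alternating e e' (length l)"
    using alternating_if_successively_neq[of e l' e'] l by simp
  obtain n where "length l = Suc (Suc (Suc n))"
    using len by (auto dest!: le_Suc_ex simp: numeral_3_eq_3)
  with alt have "successively joins (e # e' # e # alternating e' e n)"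
    using walk by (metis alternating.simps(2))
  then have "joins e e' \<and> joins e' e" by simp
  then show ?thesis
    using alt pair by (auto simp: doubleton_eq_iff)
qed

lemma two_edge_walk_cases:
  assumes walk: "successively joins l"
    and edges: "mset l = replicate_mset t (b1, a1, c1) + replicate_mset t (b2, a2, c2)"
    and distinct: "(b1, a1, c1) \<noteq> (b2, a2, c2)" and t: "2 \<le> t"
  shows "a1 = c1 \<and> a2 = c2 \<and> a1 = a2
    \<or> a1 \<noteq> c1 \<and> a2 = c1 \<and> c2 = a1 \<and>
      (l = alternating (b1, a1, c1) (b2, a2, c2) (2 * t) \<or> l = alternating (b2, a2, c2) (b1, a1, c1) (2 * t))"
proof -
  have set: "set l = {(b1, a1, c1), (b2, a2, c2)}"
    using arg_cong[OF edges, of set_mset] t by auto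
  have len: "length l = 2 * t"
    using arg_cong[OF edges, of size] by simp
  have count1: "count (mset l) (b1, a1, c1) = t" and count2: "count (mset l) (b2, a2, c2) = t"
    using edges distinct by auto
  show ?thesis
  proof (cases "a1 = c1"; cases "a2 = c2")
    assume "a1 = c1" "a2 = c2"
    then show ?thesis using walk_loops_same_vertex[OF walk] set by auto
  next
    assume "a1 = c1" "a2 \<noteq> c2"
    then show ?thesis using walk_loop_nonloop_count[OF walk, of b1 a1 b2 a2 c2] set count2 t by auto
  next
    assume "a1 \<noteq> c1" "a2 = c2"
    then show ?thesis using walk_loop_nonloop_count[OF walk, of b2 a2 b1 a1 c1] set count1 t by auto
  next
    assume "a1 \<noteq> c1" "a2 \<noteq> c2"
    then show ?thesis using walk_nonloops_alternate[OF walk set] len t by auto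
  qed
qed

section \<open>Walks in the index grid\<close>

lemma alternating_in_paths:
  assumes "even n" "a < k" "c < k"
  shows "alternating a c (Suc n) \<in> paths k a a n"
  using assms set_alternating[of a c "Suc n"] by (auto simp: paths_def last_alternating)

lemma Cons_replicate_in_paths_iff [simp]: "a # replicate n a \<in> paths k i j n \<longleftrightarrow> i = a \<and> j = a \<and> a < k"
  by (cases n) (auto simp: paths_def)

definition walks :: "nat \<Rightarrow> nat \<Rightarrow> nat \<Rightarrow> 'a list \<Rightarrow> ('a \<times> nat \<times> nat) multiset \<Rightarrow> nat list set" where
  "walks k i j w T = {ps \<in> paths k i j (length w). mset (labelled_edges w ps) = T}"

lemma walks_round_trip:
  assumes "a \<noteq> c" "a < k" "c < k" "2 \<le> t"
  shows "walks k i j w (replicate_mset t (b1, a, c) + replicate_mset t (b2, c, a)) =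
    (if i = a \<and> j = a \<and> w = alternating b1 b2 (2 * t) then {alternating a c (Suc (2 * t))}
     else if i = c \<and> j = c \<and> w = alternating b2 b1 (2 * t) then {alternating c a (Suc (2 * t))}
     else {})"
    (is "walks k i j w ?T = ?R")
proof (intro set_eqI iffI)
  fix ps assume "ps \<in> walks k i j w ?T"
  then have ps: "ps \<in> paths k i j (length w)" and edges: "mset (labelled_edges w ps) = ?T"
    by (auto simp: walks_def)
  have len: "length w = 2 * t" "length ps = Suc (2 * t)"
    using arg_cong[OF edges, of size] ps by (auto simp: paths_def)
  have "w \<noteq> []" using len assms(4) by auto
  have "labelled_edges w ps = alternating (b1, a, c) (b2, c, a) (2 * t)
      \<or> labelled_edges w ps = alternating (b2, c, a) (b1, a, c) (2 * t)"
    using two_edge_walk_cases[OF successively_joins_labelled_edges edges] assms by auto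
  then have "w = alternating b1 b2 (2 * t) \<and> ps = alternating a c (Suc (2 * t))
      \<or> w = alternating b2 b1 (2 * t) \<and> ps = alternating c a (Suc (2 * t))"
    using labelled_edges_inj[OF _ \<open>w \<noteq> []\<close>] len
    by (metis labelled_edges_alternating length_alternating)
  with ps show "ps \<in> ?R"
    using assms by (auto simp: paths_def last_alternating)
next
  fix ps assume "ps \<in> ?R"
  then show "ps \<in> walks k i j w ?T"
    using assms alternating_in_paths[of "2 * t"]
    by (auto simp: walks_def labelled_edges_alternating mset_alternating_double add.commute
        simp del: alternating.simps split: if_splits)
qed

lemma walks_loops:
  assumes "a < k" "0 < t"
  shows "walks k i j w (replicate_mset t (False, a, a) + replicate_mset t (True, a, a)) =
    (if i = a \<and> j = a \<and> count_list w False = t \<and> count_list w True = t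
     then {replicate (Suc (length w)) a} else {})"
    (is "walks k i j w ?T = ?R")
proof -
  let ?loop = "\<lambda>b. (b, a, a)"
  have edges_iff: "mset (labelled_edges w (replicate (Suc (length w)) a)) = ?T
      \<longleftrightarrow> count_list w False = t \<and> count_list w True = t"
    unfolding replicate_Suc labelled_edges_Cons_replicate[OF order_refl] mset_map
    using image_mset_eq_image_mset_iff[of ?loop "mset w" "replicate_mset t False + replicate_mset t True"]
    by (simp add: inj_on_def flip: mset_eq_bool_counts)
  have "ps \<in> walks k i j w ?T \<longleftrightarrow> ps \<in> ?R" for ps
  proof
    assume "ps \<in> walks k i j w ?T"
    then have ps: "ps \<in> paths k i j (length w)" and edges: "mset (labelled_edges w ps) = ?T"
      by (auto simp: walks_def)
    have ps_eq: "ps = replicate (Suc (length w)) a"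
    proof (rule walk_at_one_vertex)
      show "set (labelled_edges w ps) \<subseteq> UNIV \<times> {a} \<times> {a}"
        using arg_cong[OF edges, of set_mset] by auto
      show "w \<noteq> []"
        using arg_cong[OF edges, of size] assms(2) by auto
    qed (use ps in \<open>simp add: paths_def\<close>)
    moreover have "i = a \<and> j = a"
      using ps ps_eq by simp
    moreover have "count_list w False = t \<and> count_list w True = t"
      using edges edges_iff unfolding ps_eq by blast
    ultimately show "ps \<in> ?R" by simp
  next
    assume "ps \<in> ?R"
    then show "ps \<in> walks k i j w ?T"
      using edges_iff assms(1) by (auto simp: walks_def split: if_splits)
  qed
  then show ?thesis by blast
qed

lemma walks_single:
  assumes "a < k" "2 \<le> n"
  shows "walks k i j w (replicate_mset n (b, a, c)) =
    (if a = c \<and> i = a \<and> j = a \<and> w = replicate n b then {replicate (Suc n) a} else {})"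
    (is "walks k i j w ?T = ?R")
proof (intro set_eqI iffI)
  fix ps assume "ps \<in> walks k i j w ?T"
  then have ps: "ps \<in> paths k i j (length w)" and edges: "mset (labelled_edges w ps) = ?T"
    by (auto simp: walks_def)
  have len: "length w = n"
    using arg_cong[OF edges, of size] by simp
  have l: "labelled_edges w ps = replicate n (b, a, c)"
    using arg_cong[OF edges, of set_mset] len by (intro replicate_eqI) (auto split: if_splits)
  obtain n' where "n = Suc (Suc n')"
    using assms(2) by (auto dest!: le_Suc_ex)
  then have "c = a"
    using successively_joins_labelled_edges[of w ps] l by simp
  then have "labelled_edges w ps = labelled_edges (replicate n b) (replicate (Suc n) a)"
    using l by simp
  then have "w = replicate n b \<and> ps = replicate (Suc n) a"
    by (rule labelled_edges_inj) (use ps len assms(2) in \<open>auto simp: paths_def\<close>)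
  with ps \<open>c = a\<close> show "ps \<in> ?R"
    by auto
next
  fix ps assume "ps \<in> ?R"
  then show "ps \<in> walks k i j w ?T"
    using assms(1) by (auto simp: walks_def split: if_splits)
qed

lemma labelled_edges_in_grid:
  assumes "ps \<in> paths k i j (length w)"
  shows "set (labelled_edges w ps) \<subseteq> UNIV \<times> {..<k} \<times> {..<k}"
proof -
  have "ps ! m < k" if "m \<le> length w" for m
  proof -
    have "m < length ps" "set ps \<subseteq> {..<k}"
      using assms that by (auto simp: paths_def)
    then show ?thesis by (meson lessThan_iff nth_mem subsetD)
  qed
  then show ?thesis by (auto simp: labelled_edges_def)
qed

section \<open>Entries of p(X, Y)\<close>

locale nc_representation =
  fixes k :: nat and var :: "bool \<Rightarrow> nat \<Rightarrow> nat \<Rightarrow> nat" and p :: ncpoly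
  assumes var_inj: "inj_on (\<lambda>(b, i, j). var b i j) (UNIV \<times> {..<k} \<times> {..<k})"
    and finite_support: "finite (nc_support p)"
begin

definition edge_var :: "bool \<times> nat \<times> nat \<Rightarrow> nat" where
  "edge_var = (\<lambda>(b, i, j). var b i j)"

lemma edge_var_simp [simp]: "edge_var (b, i, j) = var b i j"
  by (simp add: edge_var_def)

lemma var_eq_iff:
  "i < k \<Longrightarrow> j < k \<Longrightarrow> i' < k \<Longrightarrow> j' < k \<Longrightarrow> var b i j = var b' i' j' \<longleftrightarrow> b = b' \<and> i = i' \<and> j = j'"
  using inj_onD[OF var_inj, of "(b, i, j)" "(b', i', j')"] by auto

lemma var_mem_offdiag_vars_iff: "a < k \<Longrightarrow> c < k \<Longrightarrow> var b a c \<in> offdiag_vars var k \<longleftrightarrow> a \<noteq> c"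
  by (auto simp: offdiag_vars_def var_eq_iff)

lemma var_mem_diag_vars_iff: "a < k \<Longrightarrow> c < k \<Longrightarrow> var b a c \<in> diag_vars var k \<longleftrightarrow> a = c"
  by (auto simp: diag_vars_def var_eq_iff)

lemma wmono_eq: "wmono var w ps = image_mset edge_var (mset (labelled_edges w ps))"
  by (simp add: wmono_def labelled_edges_def multiset.map_comp o_def)

lemma image_mset_edge_var_eq_iff:
  assumes "set_mset A \<subseteq> UNIV \<times> {..<k} \<times> {..<k}" "set_mset B \<subseteq> UNIV \<times> {..<k} \<times> {..<k}"
  shows "image_mset edge_var A = image_mset edge_var B \<longleftrightarrow> A = B"
proof (rule image_mset_eq_image_mset_iff)
  show "inj_on edge_var (set_mset A \<union> set_mset B)"
    using inj_on_subset[OF var_inj] assms by (simp add: edge_var_def)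
qed

lemma entry_edge_var:
  assumes "set_mset T \<subseteq> UNIV \<times> {..<k} \<times> {..<k}"
  shows "entry var k p i j (image_mset edge_var T) = (\<Sum>w\<in>nc_support p. p w * card (walks k i j w T))"
proof -
  have "wmono var w ps = image_mset edge_var T \<longleftrightarrow> mset (labelled_edges w ps) = T"
    if "ps \<in> paths k i j (length w)" for w ps
    unfolding wmono_eq using image_mset_edge_var_eq_iff[OF _ assms] labelled_edges_in_grid[OF that] by simp
  then have "{ps \<in> paths k i j (length w). wmono var w ps = image_mset edge_var T} = walks k i j w T" for w
    by (auto simp: walks_def)
  then show ?thesis
    unfolding entry_def by simp
qed

lemma entry_eq_0_if_not_var:
  assumes "u \<in># M" "\<And>b a c. a < k \<Longrightarrow> c < k \<Longrightarrow> u \<noteq> var b a c"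
  shows "entry var k p i j M = 0"
proof -
  have "wmono var w ps \<noteq> M" if "ps \<in> paths k i j (length w)" for w ps
    using assms labelled_edges_in_grid[OF that] by (force simp: wmono_eq)
  then have empty: "{ps \<in> paths k i j (length w). wmono var w ps = M} = {}" for w
    by blast
  show ?thesis
    unfolding entry_def empty by simp
qed

lemma ex_var_if_entry_nonzero:
  assumes "u \<in># M" "entry var k p i j M \<noteq> 0"
  obtains b a c where "a < k" "c < k" "u = var b a c"
  using entry_eq_0_if_not_var assms by blast

lemma sum_support_delta: "(\<Sum>w\<in>nc_support p. if w = w0 then p w else 0) = p w0"
  using finite_support by (simp add: sum.delta nc_support_def)

definition round_trip :: "nat \<Rightarrow> bool \<Rightarrow> bool \<Rightarrow> nat \<Rightarrow> nat \<Rightarrow> nat multiset" where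
  "round_trip t b1 b2 a c = replicate_mset t (var b1 a c) + replicate_mset t (var b2 c a)"

lemma set_mset_round_trip: "0 < t \<Longrightarrow> set_mset (round_trip t b1 b2 a c) = {var b1 a c, var b2 c a}"
  by (auto simp: round_trip_def)

lemma round_trip_swap: "round_trip t b1 b2 a c = round_trip t b2 b1 c a"
  by (simp add: round_trip_def add.commute)

lemma twoletter_round_trip:
  assumes "a < k" "c < k" "a \<noteq> c \<or> b1 \<noteq> b2"
  shows "twoletter t (round_trip t b1 b2 a c)"
  using assms var_eq_iff[of a c c a b1 b2] unfolding twoletter_def round_trip_def by blast

lemma round_trip_eq_iff:
  assumes "a < k" "c < k" "c' < k" "a \<noteq> c" "a \<noteq> c'" "0 < t"
  shows "round_trip t b1 b2 a c = round_trip t b1' b2' a c' \<longleftrightarrow> b1 = b1' \<and> b2 = b2' \<and> c = c'"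
proof
  assume "round_trip t b1 b2 a c = round_trip t b1' b2' a c'"
  then have "{var b1 a c, var b2 c a} = {var b1' a c', var b2' c' a}"
    using set_mset_round_trip[OF assms(6)] by metis
  with assms show "b1 = b1' \<and> b2 = b2' \<and> c = c'"
    by (auto simp: doubleton_eq_iff var_eq_iff)
qed simp

lemma round_trip_ne_diagonal:
  assumes "a < k" "c < k" "a \<noteq> c" "a' < k" "0 < t"
  shows "round_trip t b1 b2 a c \<noteq> round_trip t False True a' a'"
proof
  assume "round_trip t b1 b2 a c = round_trip t False True a' a'"
  then have "var b1 a c \<in> {var False a' a', var True a' a'}"
    using set_mset_round_trip[OF assms(5)] by (metis insertI1)
  with assms show False
    by (auto simp: var_eq_iff)
qed

lemma entry_round_trip:
  assumes "a \<noteq> c" "a < k" "c < k" "2 \<le> t"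
  shows "entry var k p i j (round_trip t b1 b2 a c) =
    (if i = a \<and> j = a then p (alternating b1 b2 (2 * t))
     else if i = c \<and> j = c then p (alternating b2 b1 (2 * t)) else 0)"
proof -
  let ?T = "replicate_mset t (b1, a, c) + replicate_mset t (b2, c, a)"
  have "entry var k p i j (round_trip t b1 b2 a c) = (\<Sum>w\<in>nc_support p. p w * card (walks k i j w ?T))"
    unfolding round_trip_def using entry_edge_var[of ?T i j] assms by simp
  also have "\<dots> = (\<Sum>w\<in>nc_support p. if i = a \<and> j = a \<and> w = alternating b1 b2 (2 * t)
      \<or> i = c \<and> j = c \<and> w = alternating b2 b1 (2 * t) then p w else 0)"
    using assms by (intro sum.cong) (auto simp: walks_round_trip)
  finally show ?thesis
    using assms(1) by (auto simp: sum_support_delta)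
qed

lemma entry_diagonal_round_trip:
  assumes "a < k" "0 < t"
  shows "entry var k p i j (round_trip t False True a a) = (if i = a \<and> j = a then phi p t t else 0)"
proof -
  let ?T = "replicate_mset t (False, a, a) + replicate_mset t (True, a, a)"
  have "entry var k p i j (round_trip t False True a a) = (\<Sum>w\<in>nc_support p. p w * card (walks k i j w ?T))"
    unfolding round_trip_def using entry_edge_var[of ?T i j] assms by simp
  also have "\<dots> = (\<Sum>w\<in>nc_support p. if i = a \<and> j = a \<and> count_list w False = t \<and> count_list w True = t
      then p w else 0)"
    using assms by (intro sum.cong) (auto simp: walks_loops)
  finally show ?thesis
    using finite_support by (cases "i = a \<and> j = a") (auto simp: phi_def sum.inter_filter)
qed

lemma entry_one_letter:
  assumes "a < k" "c < k" "2 \<le> n"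
  shows "entry var k p i j (replicate_mset n (var b a c)) =
    (if a = c \<and> i = a \<and> j = a then p (replicate n b) else 0)"
proof -
  let ?T = "replicate_mset n (b, a, c)"
  have "entry var k p i j (replicate_mset n (var b a c)) = (\<Sum>w\<in>nc_support p. p w * card (walks k i j w ?T))"
    using entry_edge_var[of ?T i j] assms by simp
  also have "\<dots> = (\<Sum>w\<in>nc_support p. if a = c \<and> i = a \<and> j = a \<and> w = replicate n b then p w else 0)"
    using assms by (intro sum.cong) (auto simp: walks_single)
  finally show ?thesis
    by (cases "a = c \<and> i = a \<and> j = a") (auto simp: sum_support_delta intro!: sum.neutral)
qed

lemma twoletter_entry_nonzero_shape:
  assumes "twoletter t M" "entry var k p i j M \<noteq> 0" "2 \<le> t"
  shows "(\<exists>b1 b2 a c. a < k \<and> c < k \<and> a \<noteq> c \<and> M = round_trip t b1 b2 a c)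
    \<or> (\<exists>a<k. M = round_trip t False True a a)"
proof -
  obtain u v where "u \<noteq> v" and M: "M = replicate_mset t u + replicate_mset t v"
    using assms(1) by (auto simp: twoletter_def)
  have "u \<in># M" "v \<in># M"
    using M assms(3) by auto
  obtain b1 a1 c1 where e1: "a1 < k" "c1 < k" "u = var b1 a1 c1"
    using ex_var_if_entry_nonzero[OF \<open>u \<in># M\<close> assms(2)] .
  obtain b2 a2 c2 where e2: "a2 < k" "c2 < k" "v = var b2 a2 c2"
    using ex_var_if_entry_nonzero[OF \<open>v \<in># M\<close> assms(2)] .
  have distinct: "(b1, a1, c1) \<noteq> (b2, a2, c2)"
    using \<open>u \<noteq> v\<close> e1 e2 by (cases b1; cases b2) auto
  let ?T = "replicate_mset t (b1, a1, c1) + replicate_mset t (b2, a2, c2)"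
  have "M = image_mset edge_var ?T"
    using M e1 e2 by simp
  then have "(\<Sum>w\<in>nc_support p. p w * card (walks k i j w ?T)) \<noteq> 0"
    using assms(2) entry_edge_var[of ?T] e1 e2 by auto
  then obtain w where "card (walks k i j w ?T) \<noteq> 0"
    using sum.neutral by fastforce
  then obtain ps where "mset (labelled_edges w ps) = ?T"
    unfolding walks_def by fastforce
  note cases = two_edge_walk_cases[OF successively_joins_labelled_edges this distinct assms(3)]
  consider "a1 = c1" "a2 = c2" "a1 = a2" | "a1 \<noteq> c1" "a2 = c1" "c2 = a1"
    using cases by argo
  then show ?thesis
  proof cases
    case 1
    then have "M = round_trip t False True a1 a1"
      using M e1 e2 distinct by (cases b1; cases b2) (auto simp: round_trip_def add.commute)
    then show ?thesis using e1 by blast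
  next
    case 2
    then have "M = round_trip t b1 b2 a1 c1"
      using M e1 e2 by (simp add: round_trip_def)
    then show ?thesis using e1 2 by blast
  qed
qed

lemma twoletter_entry_nonzero_cases:
  assumes "twoletter t M" "entry var k p i j M \<noteq> 0" "2 \<le> t"
  obtains (round_trip) b1 b2 c where "i = j" "i < k" "c < k" "c \<noteq> i" "M = round_trip t b1 b2 i c"
      "entry var k p i j M = p (alternating b1 b2 (2 * t))"
  | (diagonal) "i = j" "i < k" "M = round_trip t False True i i" "entry var k p i j M = phi p t t"
proof -
  from twoletter_entry_nonzero_shape[OF assms] show thesis
  proof (elim disjE exE conjE)
    fix b1 b2 a c assume ac: "a < k" "c < k" "a \<noteq> c" and M: "M = round_trip t b1 b2 a c"
    note entry = entry_round_trip[OF ac(3,1,2) assms(3), of i j b1 b2]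
    show thesis
    proof (cases "i = a \<and> j = a")
      case True
      then show thesis using round_trip[of c b1 b2] ac M entry by simp
    next
      case False
      then have "i = c \<and> j = c" using assms(2) M entry by (auto split: if_splits)
      then show thesis using round_trip[of a b2 b1] ac M entry by (simp add: round_trip_swap)
    qed
  next
    fix a assume a: "a < k" and M: "M = round_trip t False True a a"
    then show thesis
      using diagonal entry_diagonal_round_trip[OF a, of t i j] assms(2,3) by (auto split: if_splits)
  qed
qed

lemma oneletter_entry_nonzero_cases:
  assumes "oneletter n M" "entry var k p i j M \<noteq> 0" "2 \<le> n"
  obtains b where "i = j" "i < k" "M = replicate_mset n (var b i i)" "entry var k p i j M = p (replicate n b)"
proof -
  obtain u where M: "M = replicate_mset n u"
    using assms(1) by (auto simp: oneletter_def)
  moreover have "u \<in># M"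
    using M assms(3) by auto
  then obtain b a c where "a < k" "c < k" "u = var b a c"
    using ex_var_if_entry_nonzero assms(2) by blast
  ultimately show thesis
    using that entry_one_letter[of a c n i j b] assms(2,3) by (auto split: if_splits)
qed

definition round_trips_at :: "nat \<Rightarrow> nat \<Rightarrow> (bool \<times> bool) set \<Rightarrow> nat multiset set" where
  "round_trips_at t a B = (\<lambda>((b1, b2), c). round_trip t b1 b2 a c) ` (B \<times> ({..<k} - {a}))"

lemma finite_round_trips_at: "finite (round_trips_at t a B)"
  by (simp add: round_trips_at_def)

lemma diagonal_round_trip_notin_round_trips_at:
  assumes "a < k" "0 < t"
  shows "round_trip t False True a a \<notin> round_trips_at t a B"
  using round_trip_ne_diagonal[of a _ a t] assms unfolding round_trips_at_def by force

lemma card_round_trips_at: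
  assumes "a < k" "0 < t"
  shows "card (round_trips_at t a B) = card B * (k - 1)"
proof -
  have "inj_on (\<lambda>((b1, b2), c). round_trip t b1 b2 a c) (B \<times> ({..<k} - {a}))"
    using assms by (auto simp: inj_on_def round_trip_eq_iff)
  then show ?thesis
    using assms(1) by (simp add: round_trips_at_def card_image card_cartesian_product)
qed

lemma diagonal_twoletter_entries:
  assumes "i < k" "\<not> P 0" "2 \<le> t"
  shows "{M. twoletter t M \<and> P (entry var k p i i M)} =
    round_trips_at t i {(b1, b2). P (p (alternating b1 b2 (2 * t)))}
    \<union> (if P (phi p t t) then {round_trip t False True i i} else {})"
    (is "?S = ?R")
proof (intro set_eqI iffI)
  fix M assume "M \<in> ?S"
  then have M: "twoletter t M" "P (entry var k p i i M)" by auto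
  with assms(2) have "entry var k p i i M \<noteq> 0" by auto
  from M(1) this assms(3) show "M \<in> ?R"
  proof (cases rule: twoletter_entry_nonzero_cases)
    case (round_trip b1 b2 c)
    then show ?thesis
      using M(2) unfolding round_trips_at_def by (intro UnI1 image_eqI[where x = "((b1, b2), c)"]) auto
  next
    case diagonal
    then show ?thesis using M(2) by simp
  qed
next
  fix M assume "M \<in> ?R"
  then consider b1 b2 c where "c < k" "c \<noteq> i" "P (p (alternating b1 b2 (2 * t)))" "M = round_trip t b1 b2 i c"
    | "P (phi p t t)" "M = round_trip t False True i i"
    by (auto simp: round_trips_at_def split: if_splits)
  then show "M \<in> ?S"
  proof cases
    case 1
    then show ?thesis
      using assms entry_round_trip[of i c t i i b1 b2] twoletter_round_trip[of i c b1 b2 t] by auto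
  next
    case 2
    then show ?thesis
      using assms entry_diagonal_round_trip[of i t i i] twoletter_round_trip[of i i False True t] by auto
  qed
qed

lemma card_diagonal_twoletter_entries:
  assumes "i < k" "\<not> P 0" "2 \<le> t"
  shows "finite {M. twoletter t M \<and> P (entry var k p i i M)}"
    and "card {M. twoletter t M \<and> P (entry var k p i i M)} =
      card {(b1, b2). P (p (alternating b1 b2 (2 * t)))} * (k - 1) + (if P (phi p t t) then 1 else 0)"
proof -
  have "0 < t" "\<And>B. card (round_trips_at t i B) = card B * (k - 1)"
    using assms card_round_trips_at by auto
  then show "finite {M. twoletter t M \<and> P (entry var k p i i M)}"
    and "card {M. twoletter t M \<and> P (entry var k p i i M)} =
      card {(b1, b2). P (p (alternating b1 b2 (2 * t)))} * (k - 1) + (if P (phi p t t) then 1 else 0)"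
    unfolding diagonal_twoletter_entries[of i P t, OF assms]
    using finite_round_trips_at diagonal_round_trip_notin_round_trips_at assms(1) by simp_all
qed

lemma offdiagonal_twoletter_entry:
  assumes "i \<noteq> j" "twoletter t M" "2 \<le> t"
  shows "entry var k p i j M = 0"
proof (rule ccontr)
  assume "entry var k p i j M \<noteq> 0"
  from assms(2) this assms(3) show False
    by (cases rule: twoletter_entry_nonzero_cases) (use assms(1) in auto)
qed

lemma card_twoletter_entries:
  assumes "c \<noteq> 0" "2 \<le> t"
  shows "card {(i, j, M). i < k \<and> j < k \<and> twoletter t M \<and> entry var k p i j M = c} =
    card {(b1, b2). p (alternating b1 b2 (2 * t)) = c} * (k\<^sup>2 - k) + (if phi p t t = c then k else 0)"
proof -
  note diagonal = card_diagonal_twoletter_entries[where P = "\<lambda>x. x = c", OF _ _ assms(2)]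
  have "card {(i, j, M). i < k \<and> j < k \<and> twoletter t M \<and> entry var k p i j M = c}
      = (\<Sum>i<k. card {M. twoletter t M \<and> entry var k p i i M = c})"
  proof (rule card_diagonal_triples)
    show "i = j" if "twoletter t M \<and> entry var k p i j M = c" for i j M
      using offdiagonal_twoletter_entry[of i j t M] that assms by auto
    show "finite {M. twoletter t M \<and> entry var k p i i M = c}" if "i < k" for i
      using diagonal(1)[OF that] assms(1) by simp
  qed
  also have "\<dots> = (\<Sum>i<k. card {(b1, b2). p (alternating b1 b2 (2 * t)) = c} * (k - 1)
      + (if phi p t t = c then 1 else 0))"
    using diagonal(2) assms(1) by simp
  also have "\<dots> = card {(b1, b2). p (alternating b1 b2 (2 * t)) = c} * (k * (k - 1))
      + (if phi p t t = c then k else 0)"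
    by simp
  finally show ?thesis
    by (simp add: power2_eq_square right_diff_distrib')
qed

lemma diagonal_oneletter_entries:
  assumes "i < k" "c \<noteq> 0" "2 \<le> n"
  shows "{M. oneletter n M \<and> entry var k p i i M = c} =
    (\<lambda>b. replicate_mset n (var b i i)) ` {b. p (replicate n b) = c}"
proof (intro set_eqI iffI)
  fix M assume "M \<in> {M. oneletter n M \<and> entry var k p i i M = c}"
  then have "oneletter n M" "entry var k p i i M \<noteq> 0" "entry var k p i i M = c"
    using assms(2) by auto
  from this(1,2) assms(3) show "M \<in> (\<lambda>b. replicate_mset n (var b i i)) ` {b. p (replicate n b) = c}"
    by (cases rule: oneletter_entry_nonzero_cases) (use \<open>entry var k p i i M = c\<close> in auto)
next
  fix M assume "M \<in> (\<lambda>b. replicate_mset n (var b i i)) ` {b. p (replicate n b) = c}"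
  then show "M \<in> {M. oneletter n M \<and> entry var k p i i M = c}"
    using entry_one_letter[of i i n i i] assms by (auto simp: oneletter_def)
qed

lemma diagonal_oneletter_entries_singleton:
  assumes "i < k" "p (replicate n b) \<noteq> 0" "p (replicate n b) \<noteq> p (replicate n (\<not> b))" "2 \<le> n"
  shows "{M. oneletter n M \<and> entry var k p i i M = p (replicate n b)} = {replicate_mset n (var b i i)}"
      (is "?S = _")
    and "\<forall>M. oneletter n M \<and> entry var k p i i M = p (replicate n b) \<longrightarrow> set_mset M \<subseteq> diag_vars var k"
      (is "\<forall>M. ?P M \<longrightarrow> _")
proof -
  have "p (replicate n b') = p (replicate n b) \<longleftrightarrow> b' = b" for b'
    using assms(3) by (cases b; cases b') auto
  then show singleton: "?S = {replicate_mset n (var b i i)}"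
    unfolding diagonal_oneletter_entries[OF assms(1,2,4)] by simp
  have "set_mset (replicate_mset n (var b i i)) \<subseteq> diag_vars var k"
    using assms(1) by (auto simp: diag_vars_def)
  with singleton show "\<forall>M. ?P M \<longrightarrow> set_mset M \<subseteq> diag_vars var k"
    by (metis (mono_tags, lifting) mem_Collect_eq singletonD)
qed

lemma card_oneletter_entries:
  assumes "c \<noteq> 0" "2 \<le> n"
  shows "card {(i, j, M). i < k \<and> j < k \<and> oneletter n M \<and> entry var k p i j M = c} =
    card {b. p (replicate n b) = c} * k"
proof -
  have card_diagonal: "card {M. oneletter n M \<and> entry var k p i i M = c} = card {b. p (replicate n b) = c}"
    if "i < k" for i
  proof -
    have "inj (\<lambda>b. replicate_mset n (var b i i))"
      using that assms(2) by (auto simp: inj_def var_eq_iff replicate_mset_eq_iff)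
    then show ?thesis
      unfolding diagonal_oneletter_entries[OF that assms] by (simp add: card_image inj_on_subset)
  qed
  have "card {(i, j, M). i < k \<and> j < k \<and> oneletter n M \<and> entry var k p i j M = c}
      = (\<Sum>i<k. card {M. oneletter n M \<and> entry var k p i i M = c})"
  proof (rule card_diagonal_triples)
    show "i = j" if "oneletter n M \<and> entry var k p i j M = c" for i j M
      using that assms by (auto elim: oneletter_entry_nonzero_cases)
    show "finite {M. oneletter n M \<and> entry var k p i i M = c}" if "i < k" for i
      unfolding diagonal_oneletter_entries[OF that assms] by simp
  qed
  then show ?thesis
    using card_diagonal by simp
qed

lemma round_trips_at_subset_offdiag_vars:
  "a < k \<Longrightarrow> 0 < t \<Longrightarrow> M \<in> round_trips_at t a B \<Longrightarrow> set_mset M \<subseteq> offdiag_vars var k"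
  by (auto simp: round_trips_at_def set_mset_round_trip var_mem_offdiag_vars_iff)

lemma round_trips_at_not_subset_diag_vars:
  "a < k \<Longrightarrow> 0 < t \<Longrightarrow> M \<in> round_trips_at t a B \<Longrightarrow> \<not> set_mset M \<subseteq> diag_vars var k"
  by (auto simp: round_trips_at_def set_mset_round_trip var_mem_diag_vars_iff)

lemma card_offdiag_twoletter_diagonal_entries:
  assumes "i < k" "2 \<le> t"
  shows "card {M. twoletter t M \<and> set_mset M \<subseteq> offdiag_vars var k \<and> entry var k p i i M \<noteq> 0} =
    card {(b1, b2). p (alternating b1 b2 (2 * t)) \<noteq> 0} * (k - 1)"
proof -
  have "{M. twoletter t M \<and> set_mset M \<subseteq> offdiag_vars var k \<and> entry var k p i i M \<noteq> 0}
      = {M \<in> {M. twoletter t M \<and> entry var k p i i M \<noteq> 0}. set_mset M \<subseteq> offdiag_vars var k}"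
    by auto
  also have "\<dots> = round_trips_at t i {(b1, b2). p (alternating b1 b2 (2 * t)) \<noteq> 0}"
  proof -
    have "0 < t" using assms(2) by simp
    then have "\<not> set_mset (round_trip t False True i i) \<subseteq> offdiag_vars var k"
      using assms(1) by (simp add: set_mset_round_trip var_mem_offdiag_vars_iff)
    with round_trips_at_subset_offdiag_vars[OF assms(1) \<open>0 < t\<close>] show ?thesis
      unfolding diagonal_twoletter_entries[of i "\<lambda>x. x \<noteq> 0", OF assms(1) _ assms(2), simplified]
      by auto
  qed
  finally show ?thesis
    using card_round_trips_at assms by simp
qed

lemma card_diag_twoletter_diagonal_entries:
  assumes "i < k" "2 \<le> t"
  shows "card {M. twoletter t M \<and> set_mset M \<subseteq> diag_vars var k \<and> entry var k p i i M \<noteq> 0} =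
    chi (phi p t t)"
proof -
  have "{M. twoletter t M \<and> set_mset M \<subseteq> diag_vars var k \<and> entry var k p i i M \<noteq> 0}
      = {M \<in> {M. twoletter t M \<and> entry var k p i i M \<noteq> 0}. set_mset M \<subseteq> diag_vars var k}"
    by auto
  also have "\<dots> = (if phi p t t \<noteq> 0 then {round_trip t False True i i} else {})"
  proof -
    have "0 < t" using assms(2) by simp
    then have "set_mset (round_trip t False True i i) \<subseteq> diag_vars var k"
      using assms(1) by (simp add: set_mset_round_trip var_mem_diag_vars_iff)
    with round_trips_at_not_subset_diag_vars[OF assms(1) \<open>0 < t\<close>] show ?thesis
      unfolding diagonal_twoletter_entries[of i "\<lambda>x. x \<noteq> 0", OF assms(1) _ assms(2), simplified]
      by auto
  qed
  finally show ?thesis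
    by (simp add: chi_def)
qed

end

theorem lemma2p8:
  fixes k t :: nat and var :: "bool \<Rightarrow> nat \<Rightarrow> nat \<Rightarrow> nat" and p :: ncpoly
    and e1 e2 e3 e4 :: real
  assumes k: "k \<ge> 1"
    and vars: "bij_betw (\<lambda>(b, i, j). var b i j) (UNIV \<times> {..<k} \<times> {..<k}) {1..2 * k^2}"
    and fin: "finite (nc_support p)"
    and deg: "nc_degree p > 1"
    and t: "t \<ge> 2"
    and c1: "p (wXY t) = e1" and c2: "p (wYX t) = e2"
    and c3: "p (wX (2 * t)) = e3" and c4: "p (wY (2 * t)) = e4"
    and dist: "e1 \<noteq> e2" "e1 \<noteq> e3" "e1 \<noteq> e4" "e2 \<noteq> e3" "e2 \<noteq> e4" "e3 \<noteq> e4"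
  shows
    "(\<forall>c. c \<noteq> 0 \<longrightarrow>
        card {(i, j, M). i < k \<and> j < k \<and> twoletter t M \<and> entry var k p i j M = c}
        = (if e1 = c then k^2 - k else 0) + (if e2 = c then k^2 - k else 0)
          + (if e3 = c then k^2 - k else 0) + (if e4 = c then k^2 - k else 0)
          + (if phi p t t = c then k else 0))
   \<and> (\<forall>c. c \<noteq> 0 \<longrightarrow>
        card {(i, j, M). i < k \<and> j < k \<and> oneletter (2 * t) M \<and> entry var k p i j M = c}
        = (if e3 = c then k else 0) + (if e4 = c then k else 0))
   \<and> (\<forall>i<k.
        card {M. twoletter t M \<and> set_mset M \<subseteq> offdiag_vars var k \<and> entry var k p i i M \<noteq> 0}
          = (chi e1 + chi e2 + chi e3 + chi e4) * (k - 1)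
      \<and> card {M. twoletter t M \<and> set_mset M \<subseteq> diag_vars var k \<and> entry var k p i i M \<noteq> 0}
          = chi (phi p t t)
      \<and> (e3 \<noteq> 0 \<longrightarrow> card {M. oneletter (2 * t) M \<and> entry var k p i i M = e3} = 1
           \<and> (\<forall>M. oneletter (2 * t) M \<and> entry var k p i i M = e3 \<longrightarrow> set_mset M \<subseteq> diag_vars var k))
      \<and> (e4 \<noteq> 0 \<longrightarrow> card {M. oneletter (2 * t) M \<and> entry var k p i i M = e4} = 1
           \<and> (\<forall>M. oneletter (2 * t) M \<and> entry var k p i i M = e4 \<longrightarrow> set_mset M \<subseteq> diag_vars var k)))
   \<and> (\<forall>i<k. \<forall>j<k. i \<noteq> j \<longrightarrow> (\<forall>M. twoletter t M \<longrightarrow> entry var k p i j M = 0))"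
proof -
  interpret nc_representation k var p
    using vars fin by unfold_locales (simp_all add: bij_betw_def)
  have "2 \<le> 2 * t"
    using t by simp
  have words: "p (alternating False True (2 * t)) = e1" "p (alternating True False (2 * t)) = e2"
      "p (alternating False False (2 * t)) = e3" "p (alternating True True (2 * t)) = e4"
      "p (replicate (2 * t) False) = e3" "p (replicate (2 * t) True) = e4"
    using c1 c2 c3 c4
    by (simp_all add: wXY_def wYX_def wX_def wY_def concat_replicate_pair alternating_same)
  note one_letter = diagonal_oneletter_entries_singleton[OF _ _ _ \<open>2 \<le> 2 * t\<close>]
  show ?thesis
    using card_twoletter_entries[OF _ t] card_oneletter_entries[OF _ \<open>2 \<le> 2 * t\<close>]
      card_offdiag_twoletter_diagonal_entries[OF _ t] card_diag_twoletter_diagonal_entries[OF _ t]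
      offdiagonal_twoletter_entry[OF _ _ t] one_letter[of _ False] one_letter[of _ True]
    by (simp add: card_bool_pairs card_bool words dist dist(6)[symmetric] chi_def distrib_right of_bool_def)
qed

end
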